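(* Let $\Bbbk$ be a field of characteristic zero. The centreless BCCA satisfies $\mathfrak b=\mathrm{span}\{u_n,v_m\mid n\ge1,\ m\ge0\}$ (this is a basis), and the bracket in this basis is $$[u_n,u_m]=(n-m)(u_{n+m}-4u_{n+m-2}),\quad [u_n,v_m]=(n-m)v_{n+m}-4(n-m-1)v_{n+m-2},\quad [v_n,v_m]=0$$ for all $n,m$ in the respective ranges ($n,m\ge1$ for $u$, $n,m\ge0$ for $v$).
   Context: $\mathcal W=\Bbbk[t,t^{-1}]\partial$ is the Witt algebra with $L_n=-t^{n+1}\partial$; $I(0,-1)=t\Bbbk[t,t^{-1}]dt^{-1}$ with $\mathcal W$-action $f\partial\cdot(g\,dt^{-1})=(fg'-f'g)dt^{-1}$ and basis $M_n=-t^{n+1}dt^{-1}$. The centreless BCCA is $\mathfrak b=\mathcal O\ltimes\mathcal P\subseteq\mathcal W\ltimes I(0,-1)$ (with $I(0,-1)$ abelian), where $\mathcal O=\mathrm{span}\{L_n-L_{-n}\mid n\ge1\}$ and $\mathcal P=\mathrm{span}\{M_n+M_{-n}\mid n\ge0\}$. Define $u_n=-(t+t^{-1})^{n-1}(t^2-1)\partial$ ($n\ge1$) and $v_n=-(t+t^{-1})^n\,t\,dt^{-1}$ ($n\ge0$). *)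

theory Defs
  imports "HOL-Computational_Algebra.Formal_Laurent_Series" "HOL-Library.Product_Plus"
begin

text \<open>Laurent polynomials in t are modelled inside the formal Laurent series 'a fls
  (t = fls_X, t^{-1} = fls_X_inv).  An element f\<partial> of the Witt algebra is
  represented by its coefficient f; an element g dt^{-1} of I(0,-1) by g.
  Elements of W \<ltimes> I(0,-1) are pairs (f, g).\<close>

definition witt_act :: "'a::field_char_0 fls \<Rightarrow> 'a fls \<Rightarrow> 'a fls" where
  "witt_act f g = f * fls_deriv g - fls_deriv f * g"

definition sbr :: "'a::field_char_0 fls \<times> 'a fls \<Rightarrow> 'a fls \<times> 'a fls \<Rightarrow> 'a fls \<times> 'a fls" where
  "sbr x y = (witt_act (fst x) (fst y), witt_act (fst x) (snd y) - witt_act (fst y) (snd x))"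

definition sscale :: "'a::field_char_0 \<Rightarrow> 'a fls \<times> 'a fls \<Rightarrow> 'a fls \<times> 'a fls" where
  "sscale c x = (fls_const c * fst x, fls_const c * snd x)"

definition Lw :: "int \<Rightarrow> 'a::field_char_0 fls \<times> 'a fls" where
  "Lw n = (- fls_X_intpow (n + 1), 0)"

definition Mw :: "int \<Rightarrow> 'a::field_char_0 fls \<times> 'a fls" where
  "Mw n = (0, - fls_X_intpow (n + 1))"

definition Osub :: "('a::field_char_0 fls \<times> 'a fls) set" where
  "Osub = module.span sscale {Lw (int n) - Lw (- int n) | n::nat. n \<ge> 1}"

definition Psub :: "('a::field_char_0 fls \<times> 'a fls) set" where
  "Psub = module.span sscale {Mw (int n) + Mw (- int n) | n::nat. True}"

definition bcca :: "('a::field_char_0 fls \<times> 'a fls) set" where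
  "bcca = {x + y | x y. x \<in> Osub \<and> y \<in> Psub}"

definition ub :: "nat \<Rightarrow> 'a::field_char_0 fls \<times> 'a fls" where
  "ub n = (- (((fls_X + fls_X_inv) ^ (n - 1)) * (fls_X ^ 2 - 1)), 0)"

definition vb :: "nat \<Rightarrow> 'a::field_char_0 fls \<times> 'a fls" where
  "vb n = (0, - (((fls_X + fls_X_inv) ^ n) * fls_X))"

end

theory Submission
  imports Defs
begin

(* Write s = t + t^-1 and h = t^2 - 1, so that u_n = -s^(n-1) h d/dt and v_n = -s^n t dt^-1.
   The brackets follow from the Leibniz rule W(pf, qg) = pq W(f, g) + fg W(p, q) for the
   Wronskian W(f, g) = f g' - f' g, together with s' h = s^2 - 4 and W(h, t) = -s t.
   Multiplication by s is linear, maps u_n to u_(n+1) and v_n to v_(n+1), and maps each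
   generator L_k - L_-k (resp. M_k + M_-k) to the sum of its two neighbours, since
   s t^j = t^(j+1) + t^(j-1). Hence both spanning families of O (resp. P) obey the same
   recurrence from matching initial terms and span the same space. Independence holds
   because the u_n, and separately the v_n, have pairwise distinct lowest degrees in t. *)

interpretation WI: vector_space "sscale :: 'a::field_char_0 \<Rightarrow> 'a fls \<times> 'a fls \<Rightarrow> _"
  by unfold_locales (auto simp: sscale_def algebra_simps fls_plus_const[symmetric])

lemma (in vector_space) span_range_eq_if_recurrences:
  assumes f: "Vector_Spaces.linear scale scale f"
    and a_rec: "\<And>k. a (Suc (Suc k)) = f (a (Suc k)) - a k"
    and b_rec: "\<And>k. b (Suc k) = f (b k)"
    and a0: "a 0 = scale c (b 0)" and "c \<noteq> 0"
    and a1: "a (Suc 0) = f (b 0)"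
  shows "span (range a) = span (range b)"
proof -
  interpret f: Vector_Spaces.linear scale scale f by (rule f)
  have span_closed: "f x \<in> span X" if "f ` X \<subseteq> span X" "x \<in> span X" for X x
  proof -
    have "f ` span X = span (f ` X)" by (simp add: f.span_image)
    also have "\<dots> \<subseteq> span X" using that(1) by (simp add: span_minimal)
    finally show ?thesis using that(2) by blast
  qed
  have "a k \<in> span (range b) \<and> a (Suc k) \<in> span (range b)" for k
  proof (induction k)
    case 0
    show ?case by (simp add: a0 a1 span_base span_scale flip: b_rec)
  next
    case (Suc k)
    have "f ` range b \<subseteq> span (range b)" by (auto simp flip: b_rec intro: span_base)
    with Suc show ?case by (simp add: a_rec span_closed span_diff)
  qed
  moreover have "b k \<in> span (range a)" for k
  proof (induction k)
    case 0
    have "b 0 = scale (inverse c) (a 0)" using \<open>c \<noteq> 0\<close> by (simp add: a0)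
    then show ?case by (simp add: span_base span_scale)
  next
    case (Suc k)
    have "f (a j) \<in> span (range a)" for j
    proof (cases j)
      case 0
      have "f (a 0) = scale c (a (Suc 0))" by (simp add: a0 a1 f.scale)
      then show ?thesis using 0 by (simp add: span_base span_scale)
    next
      case (Suc i)
      have "f (a (Suc i)) = a (Suc (Suc i)) + a i" by (simp add: a_rec)
      then show ?thesis using Suc by (simp add: span_base span_add)
    qed
    then have "f ` range a \<subseteq> span (range a)" by blast
    with Suc show ?case by (simp add: b_rec span_closed)
  qed
  ultimately show ?thesis by (auto simp: span_eq)
qed

lemma fls_lincomb_distinct_subdegrees_eq_0:
  fixes \<phi> :: "'b \<Rightarrow> 'a::field fls"
  assumes "finite T"
    and inj: "inj_on (\<lambda>x. fls_subdegree (\<phi> x)) {x\<in>T. \<phi> x \<noteq> 0}"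
    and sum0: "(\<Sum>x\<in>T. fls_const (c x) * \<phi> x) = 0"
    and "x \<in> T" "\<phi> x \<noteq> 0"
  shows "c x = 0"
proof (rule ccontr)
  let ?d = "\<lambda>x. fls_subdegree (\<phi> x)"
  define S where "S = {x\<in>T. \<phi> x \<noteq> 0 \<and> c x \<noteq> 0}"
  assume "c x \<noteq> 0"
  then have "S \<noteq> {}" "finite S" using assms(1,4,5) by (auto simp: S_def)
  define x0 where "x0 = arg_min_on ?d S"
  have x0: "x0 \<in> S" "\<And>y. y \<in> S \<Longrightarrow> ?d x0 \<le> ?d y"
    using arg_min_if_finite[OF \<open>finite S\<close> \<open>S \<noteq> {}\<close>, of ?d] unfolding x0_def
    by (auto simp: not_less)
  have others: "fls_nth (fls_const (c y) * \<phi> y) (?d x0) = 0" if "y \<in> T - {x0}" for y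
  proof (cases "y \<in> S")
    case True
    then have "?d x0 < ?d y"
      using x0 inj that by (force simp: S_def inj_on_def order_le_less)
    then show ?thesis by simp
  qed (use that in \<open>auto simp: S_def\<close>)
  have "x0 \<in> T" using x0(1) by (simp add: S_def)
  have "0 = fls_nth (\<Sum>x\<in>T. fls_const (c x) * \<phi> x) (?d x0)" by (simp add: sum0)
  also have "\<dots> = (\<Sum>x\<in>T. fls_nth (fls_const (c x) * \<phi> x) (?d x0))" by (rule fls_nth_sum)
  also have "\<dots> = (\<Sum>x\<in>{x0}. fls_nth (fls_const (c x) * \<phi> x) (?d x0))"
    using others \<open>x0 \<in> T\<close> by (intro sum.mono_neutral_right[OF \<open>finite T\<close>]) auto
  also have "\<dots> \<noteq> 0" using x0(1) by (simp add: S_def)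
  finally show False by simp
qed

lemma image_atLeast_1_eq_range_Suc: "f ` {1..} = range (\<lambda>k. f (Suc k))"
proof -
  have "{1..} = range Suc" using atLeast_Suc_greaterThan[of 0] greaterThan_0 by simp
  then show ?thesis by (simp add: image_image)
qed

lemma witt_act_mult_mult:
  "witt_act (p * f) (q * g) = p * q * witt_act f g + f * g * witt_act p q"
  by (simp add: witt_act_def algebra_simps)

lemma witt_act_self [simp]: "witt_act f f = 0"
  by (simp add: witt_act_def)

lemma witt_act_zero [simp]: "witt_act f 0 = 0" "witt_act 0 f = 0"
  by (simp_all add: witt_act_def)

lemma witt_act_uminus_uminus [simp]: "witt_act (- f) (- g) = witt_act f g"
  by (simp add: witt_act_def)

lemma witt_act_power_power:
  "witt_act (p ^ i) (p ^ j) = (of_nat j - of_nat i) * p ^ (i + j - 1) * fls_deriv p"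
proof (cases "i = 0 \<or> j = 0")
  case True
  then show ?thesis by (auto simp: witt_act_def fls_deriv_power)
next
  case False
  then have "p ^ i * p ^ (j - 1) = p ^ (i + j - 1)" "p ^ (i - 1) * p ^ j = p ^ (i + j - 1)"
    by (simp_all flip: power_add)
  then show ?thesis by (simp add: witt_act_def fls_deriv_power algebra_simps)
qed

lemma sbr_on_axes:
  "sbr (f, 0) (g, 0) = (witt_act f g, 0)"
  "sbr (f, 0) (0, g) = (0, witt_act f g)"
  "sbr (0, f) (0, g) = 0"
  by (simp_all add: sbr_def zero_prod_def)

lemma sscale_of_int: "sscale (of_int z) x = (of_int z * fst x, of_int z * snd x)"
  by (simp add: sscale_def fls_of_int)

lemma fls_X_times_fls_X_inv: "(fls_X :: 'a::ring_1 fls) * fls_X_inv = 1"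
  by (simp add: fls_X_inv_times_conv_shift fls_X_conv_shift_1)

lemma fls_X_intpow_one: "fls_X_intpow 1 = fls_X"
  and fls_X_intpow_minus_one: "fls_X_intpow (-1) = fls_X_inv"
  by (simp_all add: fls_X_conv_shift_1 fls_X_inv_conv_shift_1)

lemma fls_X_intpow_two: "fls_X_intpow 2 = fls_X\<^sup>2"
  by (simp only: fls_X_power_conv_shift_1 of_nat_numeral)

definition t_plus_inv :: "'a::comm_ring_1 fls" where
  "t_plus_inv = fls_X + fls_X_inv"

lemma t_plus_inv_nonzero: "t_plus_inv \<noteq> (0 :: 'a::comm_ring_1 fls)"
  by (rule fls_nonzeroI[of _ 1]) (simp add: t_plus_inv_def)

lemma subdegree_t_plus_inv: "fls_subdegree (t_plus_inv :: 'a::comm_ring_1 fls) = -1"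
  by (rule fls_subdegree_eqI) (simp_all add: t_plus_inv_def)

lemma fls_deriv_t_plus_inv_mult:
  "fls_deriv t_plus_inv * (fls_X\<^sup>2 - 1) = t_plus_inv\<^sup>2 - (4 :: 'a::comm_ring_1 fls)"
proof -
  have "fls_X_inv\<^sup>2 * fls_X\<^sup>2 = (1 :: 'a fls)"
    by (metis fls_X_times_fls_X_inv mult.commute power_mult_distrib power_one)
  then show ?thesis
    by (simp add: t_plus_inv_def power2_eq_square algebra_simps fls_X_times_fls_X_inv)
qed

lemma t_plus_inv_mult_X: "t_plus_inv * fls_X = (fls_X\<^sup>2 + 1 :: 'a::comm_ring_1 fls)"
  by (simp add: t_plus_inv_def power2_eq_square algebra_simps fls_X_times_fls_X_inv)

lemma witt_act_X_square_minus_one_X: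
  "witt_act (fls_X\<^sup>2 - 1) fls_X = - (t_plus_inv * fls_X :: 'a::field_char_0 fls)"
  unfolding t_plus_inv_mult_X by (simp add: witt_act_def fls_deriv_power power2_eq_square)

lemma t_plus_inv_mult_X_intpow:
  "t_plus_inv * fls_X_intpow j = fls_X_intpow (j + 1) + (fls_X_intpow (j - 1) :: 'a::comm_ring_1 fls)"
  unfolding t_plus_inv_def distrib_right fls_X_intpow_one[symmetric] fls_X_intpow_minus_one[symmetric]
    fls_X_intpow_times_fls_X_intpow
  by (simp add: add.commute)

lemma ub_Suc: "ub (Suc a) = (- (t_plus_inv ^ a * (fls_X\<^sup>2 - 1)), 0)"
  by (simp add: ub_def t_plus_inv_def)

lemma vb_eq: "vb k = (0, - (t_plus_inv ^ k * fls_X))"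
  by (simp add: vb_def t_plus_inv_def)

lemma sbr_ub_ub:
  assumes "1 \<le> n" "1 \<le> m"
  shows "sbr (ub n) (ub m :: 'a::field_char_0 fls \<times> 'a fls) =
    sscale (of_int (int n - int m)) (ub (n + m) - sscale 4 (ub (n + m - 2)))"
proof -
  obtain a b where n: "n = Suc a" and m: "m = Suc b"
    using assms by (metis Suc_le_D One_nat_def)
  let ?s = "t_plus_inv :: 'a fls" and ?h = "fls_X\<^sup>2 - 1 :: 'a fls"
  have "sbr (ub n) (ub m) = ((of_nat b - of_nat a) * ?s ^ (a + b - 1) * ?h * (?s\<^sup>2 - 4), 0)"
    by (simp add: n m ub_Suc sbr_on_axes witt_act_mult_mult witt_act_power_power
        flip: fls_deriv_t_plus_inv_mult)
  also have "\<dots> = sscale (of_int (int n - int m)) (ub (n + m) - sscale 4 (ub (n + m - 2)))"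
  proof (cases "a + b")
    case 0
    \<comment> \<open>here ub (n + m - 2) = ub 0 is a junk value, but its coefficient n - m vanishes\<close>
    then show ?thesis by (simp add: n m sscale_def)
  next
    case (Suc c)
    then have "n + m = Suc (Suc (Suc c))" "n + m - 2 = Suc c" by (simp_all add: n m)
    then show ?thesis using Suc
      unfolding sscale_of_int by (simp add: n m ub_Suc sscale_def algebra_simps power2_eq_square)
  qed
  finally show ?thesis .
qed

lemma sbr_ub_vb:
  assumes "1 \<le> n"
  shows "sbr (ub n) (vb m :: 'a::field_char_0 fls \<times> 'a fls) =
    sscale (of_int (int n - int m)) (vb (n + m))
    - sscale (4 * of_int (int n - int m - 1)) (vb (n + m - 2))"
proof -
  obtain a where n: "n = Suc a"
    using assms by (metis Suc_le_D One_nat_def)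
  let ?s = "t_plus_inv :: 'a fls"
  have "sbr (ub n) (vb m) =
      (0, (of_nat m - of_nat a) * ?s ^ (a + m - 1) * fls_X * (?s\<^sup>2 - 4) - ?s ^ Suc (a + m) * fls_X)"
    by (simp add: n ub_Suc vb_eq sbr_on_axes witt_act_mult_mult witt_act_power_power
        witt_act_X_square_minus_one_X flip: fls_deriv_t_plus_inv_mult) (simp add: algebra_simps power_add)
  also have "\<dots> = sscale (of_int (int n - int m)) (vb (n + m))
      - sscale (4 * of_int (int n - int m - 1)) (vb (n + m - 2))"
  proof (cases "a + m")
    case 0
    \<comment> \<open>here n + m - 2 truncates to 0, but the coefficient 4 (n - m - 1) vanishes\<close>
    then show ?thesis by (simp add: n vb_eq sscale_def)
  next
    case (Suc c)
    have four: "4 * of_int (int n - int m - 1) = (of_int (4 * (int n - int m - 1)) :: 'a)"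
      by simp
    have "n + m = Suc (Suc c)" "n + m - 2 = c" using Suc by (simp_all add: n)
    then show ?thesis using Suc
      unfolding four sscale_of_int by (simp add: n vb_eq sscale_def algebra_simps power2_eq_square)
  qed
  finally show ?thesis .
qed

lemma sbr_vb_vb: "sbr (vb n) (vb m) = 0"
  by (simp add: vb_eq sbr_on_axes)

definition mult_pair :: "'a::field_char_0 fls \<Rightarrow> 'a fls \<times> 'a fls \<Rightarrow> 'a fls \<times> 'a fls" where
  "mult_pair p x = (p * fst x, p * snd x)"

lemma linear_mult_pair: "Vector_Spaces.linear sscale sscale (mult_pair p)"
  by unfold_locales (simp_all add: mult_pair_def sscale_def algebra_simps)

lemma mult_pair_Lw_diff:
  "mult_pair t_plus_inv (Lw k - Lw (- k)) =
    (Lw (k + 1) - Lw (- (k + 1))) + (Lw (k - 1) - Lw (- (k - 1)))"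
  unfolding mult_pair_def Lw_def
  by (simp only: fst_conv snd_conv fst_diff snd_diff right_diff_distrib mult_minus_right
      mult_zero_right t_plus_inv_mult_X_intpow) (simp add: algebra_simps)

lemma mult_pair_Mw_add:
  "mult_pair t_plus_inv (Mw k + Mw (- k)) =
    (Mw (k + 1) + Mw (- (k + 1))) + (Mw (k - 1) + Mw (- (k - 1)))"
  unfolding mult_pair_def Mw_def
  by (simp only: fst_conv snd_conv fst_add snd_add distrib_left mult_minus_right
      mult_zero_right t_plus_inv_mult_X_intpow) (simp add: algebra_simps)

lemma mult_pair_ub: "mult_pair t_plus_inv (ub (Suc a)) = ub (Suc (Suc a))"
  by (simp add: mult_pair_def ub_Suc)

lemma mult_pair_vb: "mult_pair t_plus_inv (vb k) = vb (Suc k)"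
  by (simp add: mult_pair_def vb_eq)

lemma Osub_eq_span_ub: "Osub = WI.span (ub ` {1..})"
proof -
  define a :: "nat \<Rightarrow> 'a fls \<times> 'a fls" where "a k = Lw (int (Suc k)) - Lw (- int (Suc k))" for k
  have gens: "{Lw (int n) - Lw (- int n) | n::nat. n \<ge> 1} = range a"
    unfolding a_def setcompr_eq_image atLeast_def[symmetric] image_atLeast_1_eq_range_Suc ..
  have a_rec: "a (Suc (Suc k)) = mult_pair t_plus_inv (a (Suc k)) - a k" for k
    using mult_pair_Lw_diff[of "int k + 2", where 'a='a] by (simp add: a_def algebra_simps)
  have a0: "a 0 = ub 1"
    by (simp add: a_def Lw_def ub_def fls_X_intpow_two)
  have a1: "a (Suc 0) = mult_pair t_plus_inv (ub 1)"
    using mult_pair_Lw_diff[of 1, where 'a='a] a0 by (simp add: a_def)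
  show ?thesis
    unfolding Osub_def gens image_atLeast_1_eq_range_Suc
  proof (rule WI.span_range_eq_if_recurrences[where a = a, OF linear_mult_pair a_rec])
    show "ub (Suc (Suc k)) = mult_pair t_plus_inv (ub (Suc k))" for k
      by (rule mult_pair_ub[symmetric])
    show "a 0 = sscale 1 (ub (Suc 0))" using a0 by (simp add: sscale_def)
    show "a (Suc 0) = mult_pair t_plus_inv (ub (Suc 0))" using a1 by simp
  qed simp
qed

lemma Psub_eq_span_vb: "Psub = WI.span (range vb)"
proof -
  define a :: "nat \<Rightarrow> 'a fls \<times> 'a fls" where "a k = Mw (int k) + Mw (- int k)" for k
  have gens: "{Mw (int n) + Mw (- int n) | n::nat. True} = range a"
    by (auto simp: a_def)
  have a_rec: "a (Suc (Suc k)) = mult_pair t_plus_inv (a (Suc k)) - a k" for k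
    using mult_pair_Mw_add[of "int k + 1", where 'a='a] by (simp add: a_def algebra_simps)
  have a0: "a 0 = sscale 2 (vb 0)"
    by (simp add: a_def Mw_def vb_def sscale_def fls_X_intpow_one)
  have a1: "a (Suc 0) = mult_pair t_plus_inv (vb 0)"
    by (simp add: a_def Mw_def mult_pair_def vb_eq t_plus_inv_mult_X fls_X_intpow_two)
  show ?thesis
    unfolding Psub_def gens
    by (rule WI.span_range_eq_if_recurrences[where a = a,
          OF linear_mult_pair a_rec mult_pair_vb[symmetric] a0 _ a1]) simp
qed

lemma bcca_eq_span: "bcca = WI.span (ub ` {1..} \<union> range vb)"
  unfolding bcca_def WI.span_Un Osub_eq_span_ub Psub_eq_span_vb by blast

lemma X_square_minus_one_nonzero: "fls_X\<^sup>2 - 1 \<noteq> (0 :: 'a::ring_1 fls)"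
  by (rule fls_nonzeroI[of _ 0]) simp

lemma subdegree_X_square_minus_one: "fls_subdegree (fls_X\<^sup>2 - 1 :: 'a::ring_1 fls) = 0"
  by (rule fls_subdegree_eqI) simp_all

lemma fst_ub:
  fixes n :: nat
  assumes "1 \<le> n"
  defines "f \<equiv> fst (ub n :: 'a::field_char_0 fls \<times> 'a fls)"
  shows "f \<noteq> 0" and "fls_subdegree f = 1 - int n"
proof -
  obtain a where "n = Suc a" using assms by (metis Suc_le_D One_nat_def)
  then show "f \<noteq> 0" "fls_subdegree f = 1 - int n"
    using t_plus_inv_nonzero[where 'a='a] X_square_minus_one_nonzero[where 'a='a]
    by (simp_all add: f_def ub_Suc fls_subdegree_pow subdegree_t_plus_inv subdegree_X_square_minus_one)
qed

lemma snd_vb: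
  "snd (vb k) \<noteq> (0 :: 'a::field_char_0 fls)" "fls_subdegree (snd (vb k :: 'a fls \<times> 'a fls)) = 1 - int k"
  using t_plus_inv_nonzero[where 'a='a] by (simp_all add: vb_eq fls_subdegree_pow subdegree_t_plus_inv)

lemma inj_on_ub: "inj_on ub {1..}"
proof (rule inj_onI)
  fix n m assume "n \<in> {1..}" "m \<in> {1..}" "ub n = ub m"
  then have "1 - int n = 1 - int m" by (metis atLeast_iff fst_ub(2))
  then show "n = m" by simp
qed

lemma inj_vb: "inj vb"
proof (rule injI)
  fix k l assume "vb k = vb l"
  then have "1 - int k = 1 - int l" by (metis snd_vb(2))
  then show "k = l" by simp
qed

lemma ub_vb_disjoint: "ub ` {1..} \<inter> range vb = ({} :: ('a::field_char_0 fls \<times> 'a fls) set)"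
proof -
  have "ub n \<notin> (range vb :: ('a fls \<times> 'a fls) set)" if "1 \<le> n" for n
    using fst_ub(1)[OF that] by (metis fst_conv imageE vb_eq)
  then show ?thesis by blast
qed

lemma independent_ub_vb: "WI.independent (ub ` {1..} \<union> range vb)"
proof (unfold WI.independent_explicit_module, intro allI impI)
  let ?U = "ub ` {1..} :: ('a fls \<times> 'a fls) set" and ?V = "range vb :: ('a fls \<times> 'a fls) set"
  fix T u x
  assume T: "finite T" "T \<subseteq> ?U \<union> ?V" and sum0: "(\<Sum>y\<in>T. sscale (u y) y) = 0" and "x \<in> T"
  have fst0: "(\<Sum>y\<in>T. fls_const (u y) * fst y) = 0" and snd0: "(\<Sum>y\<in>T. fls_const (u y) * snd y) = 0"
    using arg_cong[OF sum0, of fst] arg_cong[OF sum0, of snd] by (simp_all add: fst_sum snd_sum sscale_def)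
  have "inj_on (\<lambda>y. fls_subdegree (fst y)) ?U"
    by (rule inj_on_imageI) (auto simp: inj_on_def fst_ub)
  then have inj_fst: "inj_on (\<lambda>y. fls_subdegree (fst y)) {y\<in>T. fst y \<noteq> 0}"
    by (rule inj_on_subset) (use T in \<open>auto simp: vb_def\<close>)
  have "inj_on (\<lambda>y. fls_subdegree (snd y)) ?V"
    by (rule inj_on_imageI) (auto simp: inj_on_def snd_vb)
  then have inj_snd: "inj_on (\<lambda>y. fls_subdegree (snd y)) {y\<in>T. snd y \<noteq> 0}"
    by (rule inj_on_subset) (use T in \<open>auto simp: ub_def\<close>)
  have "fst x \<noteq> 0 \<or> snd x \<noteq> 0"
    using T \<open>x \<in> T\<close> fst_ub(1)[where 'a='a] snd_vb(1)[where 'a='a] by auto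
  then show "u x = 0"
    using fls_lincomb_distinct_subdegrees_eq_0[OF \<open>finite T\<close> inj_fst fst0 \<open>x \<in> T\<close>]
      fls_lincomb_distinct_subdegrees_eq_0[OF \<open>finite T\<close> inj_snd snd0 \<open>x \<in> T\<close>] by blast
qed

theorem corollary4p34:
  shows "(bcca :: ('a::field_char_0 fls \<times> 'a fls) set)
           = module.span sscale (ub ` {1..} \<union> vb ` UNIV)
    \<and> module.independent sscale ((ub ` {1..} \<union> vb ` UNIV) :: ('a fls \<times> 'a fls) set)
    \<and> inj_on (ub :: nat \<Rightarrow> 'a fls \<times> 'a fls) {1..}
    \<and> inj (vb :: nat \<Rightarrow> 'a fls \<times> 'a fls)
    \<and> ub ` {1..} \<inter> vb ` UNIV = ({} :: ('a fls \<times> 'a fls) set)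
    \<and> (\<forall>n m. 1 \<le> n \<longrightarrow> 1 \<le> m \<longrightarrow>
          sbr (ub n) (ub m :: 'a fls \<times> 'a fls) =
            sscale (of_int (int n - int m)) (ub (n + m) - sscale 4 (ub (n + m - 2))))
    \<and> (\<forall>n m. 1 \<le> n \<longrightarrow>
          sbr (ub n) (vb m :: 'a fls \<times> 'a fls) =
            sscale (of_int (int n - int m)) (vb (n + m))
            - sscale (4 * of_int (int n - int m - 1)) (vb (n + m - 2)))
    \<and> (\<forall>n m. sbr (vb n) (vb m :: 'a fls \<times> 'a fls) = (0 :: 'a fls \<times> 'a fls))"
  using bcca_eq_span independent_ub_vb inj_on_ub inj_vb ub_vb_disjoint
    sbr_ub_ub sbr_ub_vb sbr_vb_vb
  by blast

end
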